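(* Let $F\in\mathbb{R}[x_1,\dots,x_n]$ be a form of degree $d$ with $F(X)>0$ for all $X\in\mathbb{T}_n=\{(x_1,\dots,x_n): x_i\ge0,\ \sum_i x_i=1\}$. Then there exists $M$ such that for every $m\ge M$ and every choice of $B_{[\alpha_1]},\dots,B_{[\alpha_m]}\in PW_n$, the form $F(B_{[\alpha_1]}\cdots B_{[\alpha_m]}X^{\mathrm{Tr}})$ is nonlacunary and trivially positive, i.e., every monomial $x_1^{i_1}\cdots x_n^{i_n}$ with $i_1+\cdots+i_n=d$ occurs in it with a strictly positive coefficient.
   Context: $W_n$ is the $n\times n$ matrix with $(W_n)_{ij}=1/j$ for $i\le j$ and $0$ for $i>j$. For a permutation $[k_1\cdots k_n]$ of $1,\dots,n$, $P_{[k_1\cdots k_n]}$ is the permutation matrix with $1$ in positions $(i,k_i)$ and $0$ elsewhere, and $B_{[k_1\cdots k_n]}=P_{[k_1\cdots k_n]}W_n$; $PW_n$ denotes the set of these $n!$ matrices. $X=(x_1,\dots,x_n)$. *)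

theory Defs
  imports Complex_Main "HOL-Combinatorics.Permutations"
begin

(* n x n real matrices as functions, indices 0..n-1 (entries outside are 0);
   vectors as functions nat => real, only indices < n matter. *)

definition monomials :: "nat \<Rightarrow> nat \<Rightarrow> (nat \<Rightarrow> nat) set" where
  "monomials n d = {\<alpha>. (\<forall>i\<ge>n. \<alpha> i = 0) \<and> (\<Sum>i<n. \<alpha> i) = d}"

definition form_eval :: "nat \<Rightarrow> nat \<Rightarrow> ((nat \<Rightarrow> nat) \<Rightarrow> real) \<Rightarrow> (nat \<Rightarrow> real) \<Rightarrow> real" where
  "form_eval n d c X = (\<Sum>\<alpha>\<in>monomials n d. c \<alpha> * (\<Prod>i<n. X i ^ \<alpha> i))"

definition Wmat :: "nat \<Rightarrow> nat \<Rightarrow> nat \<Rightarrow> real" where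
  "Wmat n i j = (if i < n \<and> j < n \<and> i \<le> j then 1 / real (j + 1) else 0)"

definition perm_mat :: "nat \<Rightarrow> (nat \<Rightarrow> nat) \<Rightarrow> nat \<Rightarrow> nat \<Rightarrow> real" where
  "perm_mat n k i j = (if i < n \<and> j < n \<and> j = k i then 1 else 0)"

definition mat_mult :: "nat \<Rightarrow> (nat \<Rightarrow> nat \<Rightarrow> real) \<Rightarrow> (nat \<Rightarrow> nat \<Rightarrow> real) \<Rightarrow> nat \<Rightarrow> nat \<Rightarrow> real" where
  "mat_mult n A B i j = (\<Sum>l<n. A i l * B l j)"

definition id_mat :: "nat \<Rightarrow> nat \<Rightarrow> nat \<Rightarrow> real" where
  "id_mat n i j = (if i < n \<and> i = j then 1 else 0)"

definition mat_vec :: "nat \<Rightarrow> (nat \<Rightarrow> nat \<Rightarrow> real) \<Rightarrow> (nat \<Rightarrow> real) \<Rightarrow> nat \<Rightarrow> real" where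
  "mat_vec n A X i = (\<Sum>j<n. A i j * X j)"

definition mat_prod_list :: "nat \<Rightarrow> (nat \<Rightarrow> nat \<Rightarrow> real) list \<Rightarrow> nat \<Rightarrow> nat \<Rightarrow> real" where
  "mat_prod_list n Bs = foldr (mat_mult n) Bs (id_mat n)"

definition PW :: "nat \<Rightarrow> (nat \<Rightarrow> nat \<Rightarrow> real) set" where
  "PW n = {mat_mult n (perm_mat n k) (Wmat n) | k. k permutes {..<n}}"

end

theory Submission
  imports Defs "HOL-Analysis.Analysis"
begin

text \<open>
  Every matrix in \<open>PW\<^sub>n\<close> is column stochastic, and right multiplication by it replaces
  column \<open>j\<close> by the average of \<open>j + 1\<close> columns. Such an averaging shrinks the spread of
  every row by the factor \<open>1 - 1/n\<close>, so a long product \<open>A\<close> of these matrices is column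
  stochastic with all columns within \<open>(1 - 1/n)\<^sup>m\<close> of each other. Expanding \<open>F(AX)\<close> along
  words, the contribution of each word is then close to \<open>F\<close> evaluated at a column of \<open>A\<close>,
  which lies in the simplex; there \<open>F\<close> is bounded below by a positive constant, so every
  coefficient of \<open>F(AX)\<close> is positive once \<open>m\<close> is large.
\<close>

section \<open>A positive form is bounded away from zero on the simplex\<close>

lemma continuous_on_coordinate [continuous_intros]:
  "continuous_on S (\<lambda>x::nat \<Rightarrow> real. x i)"
  by (rule continuous_on_subset[OF continuous_on_product_coordinates]) simp

lemma form_eval_cong_coordinates:
  "(\<And>i. i < n \<Longrightarrow> p i = q i) \<Longrightarrow> form_eval n d c p = form_eval n d c q"
  unfolding form_eval_def by (intro sum.cong refl arg_cong2[where f="(*)"] prod.cong) auto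

text \<open>
  Vectors are functions on \<open>nat\<close>; pinning the coordinates \<open>\<ge> n\<close> to \<open>0\<close> makes the simplex
  compact in the product topology.
\<close>

lemma compact_standard_simplex:
  fixes n :: nat
  shows "compact (PiE UNIV (\<lambda>i. if i < n then {0..1::real} else {0}) \<inter> {p. (\<Sum>i<n. p i) = 1})"
proof -
  have "compactin (product_topology (\<lambda>_. euclidean) UNIV)
          (PiE UNIV (\<lambda>i. if i < n then {0..1::real} else {0}))"
    unfolding compactin_PiE by auto
  then have "compact (PiE UNIV (\<lambda>i. if i < n then {0..1::real} else {0}))"
    unfolding euclidean_product_topology by simp
  moreover have "closed {p::nat \<Rightarrow> real. (\<Sum>i<n. p i) = 1}"
    by (intro closed_Collect_eq continuous_intros)
  ultimately show ?thesis
    by (rule compact_Int_closed)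
qed

lemma form_eval_bounded_below_on_simplex:
  assumes "n \<ge> 1"
    and pos: "\<forall>X. (\<forall>i<n. X i \<ge> 0) \<and> (\<Sum>i<n. X i) = 1 \<longrightarrow> form_eval n d c X > 0"
  obtains \<delta> where "\<delta> > 0"
    and "\<And>p. (\<forall>i<n. p i \<ge> 0) \<Longrightarrow> (\<Sum>i<n. p i) = 1 \<Longrightarrow> form_eval n d c p \<ge> \<delta>"
proof -
  define K where "K = PiE UNIV (\<lambda>i. if i < n then {0..1::real} else {0}) \<inter> {p. (\<Sum>i<n. p i) = 1}"
  have "(\<lambda>i. if i = 0 then 1 else 0) \<in> K"
    using \<open>n \<ge> 1\<close> by (auto simp: K_def PiE_iff)
  moreover have "continuous_on K (form_eval n d c)"
    unfolding form_eval_def by (intro continuous_intros)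
  ultimately obtain x where "x \<in> K" and x_min: "\<And>y. y \<in> K \<Longrightarrow> form_eval n d c x \<le> form_eval n d c y"
    using continuous_attains_inf[OF compact_standard_simplex[of n, folded K_def]] by blast
  have "\<forall>i<n. x i \<ge> 0"
  proof (intro allI impI)
    fix i assume "i < n"
    then show "x i \<ge> 0"
      using \<open>x \<in> K\<close> by (auto simp: K_def PiE_iff dest!: spec[of _ i])
  qed
  moreover have "(\<Sum>i<n. x i) = 1"
    using \<open>x \<in> K\<close> by (simp add: K_def)
  ultimately have "form_eval n d c x > 0"
    using pos by blast
  moreover have "form_eval n d c x \<le> form_eval n d c p"
    if p_nonneg: "\<forall>i<n. p i \<ge> 0" and p_sum: "(\<Sum>i<n. p i) = 1" for p
  proof -
    have "p i \<le> 1" if "i < n" for i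
      using member_le_sum[of i "{..<n}" p] that p_nonneg p_sum by auto
    then have "(\<lambda>i. if i < n then p i else 0) \<in> K"
      using p_nonneg p_sum by (auto simp: K_def PiE_iff)
    then show ?thesis
      using x_min form_eval_cong_coordinates[of n "\<lambda>i. if i < n then p i else 0" p] by fastforce
  qed
  ultimately show ?thesis
    using that by blast
qed

section \<open>Expanding a substituted form along words\<close>

text \<open>
  A word of length \<open>d\<close> over the letters \<open>{..<n}\<close> stands for the monomial
  \<open>x\<^bsub>w 0\<^esub> \<cdots> x\<^bsub>w (d - 1)\<^esub>\<close>, whose exponent vector counts the letters.
\<close>

definition words :: "nat \<Rightarrow> nat \<Rightarrow> (nat \<Rightarrow> nat) set" where
  "words n d = PiE {..<d} (\<lambda>_. {..<n})"

definition word_exponent :: "nat \<Rightarrow> (nat \<Rightarrow> nat) \<Rightarrow> nat \<Rightarrow> nat" where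
  "word_exponent d w j = card {t\<in>{..<d}. w t = j}"

lemma finite_words: "finite (words n d)"
  unfolding words_def by (intro finite_PiE) auto

lemma words_letter_less: "w \<in> words n d \<Longrightarrow> t < d \<Longrightarrow> w t < n"
  unfolding words_def by auto

lemma finite_monomials: "finite (monomials n d)"
proof (rule finite_subset)
  show "monomials n d \<subseteq> (\<lambda>g i. if i < n then g i else 0) ` PiE {..<n} (\<lambda>_. {..d})"
  proof
    fix \<alpha> assume \<alpha>: "\<alpha> \<in> monomials n d"
    then have "\<alpha> i \<le> d" if "i < n" for i
      using member_le_sum[of i "{..<n}" \<alpha>] that by (auto simp: monomials_def)
    then have "restrict \<alpha> {..<n} \<in> PiE {..<n} (\<lambda>_. {..d})"
      by auto
    moreover have "\<alpha> = (\<lambda>i. if i < n then restrict \<alpha> {..<n} i else 0)"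
      using \<alpha> by (auto simp: monomials_def)
    ultimately show "\<alpha> \<in> (\<lambda>g i. if i < n then g i else 0) ` PiE {..<n} (\<lambda>_. {..d})"
      by blast
  qed
qed (intro finite_imageI finite_PiE; simp)

lemma word_exponent_in_monomials:
  assumes "w \<in> words n d"
  shows "word_exponent d w \<in> monomials n d"
proof -
  have "word_exponent d w i = 0" if "i \<ge> n" for i
    using assms that words_letter_less[OF assms] by (fastforce simp: word_exponent_def)
  moreover have "(\<Sum>i<n. \<Sum>t\<in>{t\<in>{..<d}. w t = i}. 1::nat) = (\<Sum>t<d. 1)"
    using words_letter_less[OF assms] by (intro sum.group) auto
  ultimately show ?thesis
    by (simp add: monomials_def word_exponent_def)
qed

lemma prod_word_eq_monomial:
  fixes y :: "nat \<Rightarrow> 'a::comm_monoid_mult"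
  assumes "w \<in> words n d"
  shows "(\<Prod>t<d. y (w t)) = (\<Prod>j<n. y j ^ word_exponent d w j)"
proof -
  have "(\<Prod>t<d. y (w t)) = (\<Prod>j<n. \<Prod>t\<in>{t\<in>{..<d}. w t = j}. y (w t))"
    using words_letter_less[OF assms] by (intro prod.group[symmetric]) auto
  also have "\<dots> = (\<Prod>j<n. y j ^ word_exponent d w j)"
    by (simp add: word_exponent_def)
  finally show ?thesis .
qed

lemma word_exponent_surj:
  assumes "\<alpha> \<in> monomials n d"
  shows "\<exists>w\<in>words n d. word_exponent d w = \<alpha>"
proof -
  define S where "S = (SIGMA i:{..<n}. {..<\<alpha> i})"
  have "card S = d"
    using assms by (simp add: S_def monomials_def)
  then obtain h where h: "bij_betw h {..<d} S"
    using finite_same_card_bij[of "{..<d}" S] by (auto simp: S_def)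
  define w where "w = restrict (fst \<circ> h) {..<d}"
  have "fst (h t) < n" if "t < d" for t
  proof -
    have "h t \<in> S"
      using bij_betwE[OF h] that by blast
    then show ?thesis
      by (cases "h t") (auto simp: S_def)
  qed
  then have "w \<in> words n d"
    by (auto simp: w_def words_def)
  moreover have "word_exponent d w j = \<alpha> j" for j
  proof -
    have "h ` {t\<in>{..<d}. w t = j} = {q\<in>S. fst q = j}"
      using h by (auto simp: w_def bij_betw_def)
    moreover have "inj_on h {t\<in>{..<d}. w t = j}"
      using bij_betw_imp_inj_on[OF h] by (rule inj_on_subset) auto
    ultimately have "word_exponent d w j = card {q\<in>S. fst q = j}"
      unfolding word_exponent_def using card_image by fastforce
    also have "{q\<in>S. fst q = j} = (if j < n then {j} \<times> {..<\<alpha> j} else {})"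
      by (auto simp: S_def)
    also have "card \<dots> = \<alpha> j"
      using assms by (simp add: monomials_def card_cartesian_product)
    finally show ?thesis .
  qed
  ultimately show ?thesis
    by auto
qed

definition monomial_word :: "nat \<Rightarrow> nat \<Rightarrow> (nat \<Rightarrow> nat) \<Rightarrow> nat \<Rightarrow> nat" where
  "monomial_word n d \<alpha> = (SOME w. w \<in> words n d \<and> word_exponent d w = \<alpha>)"

lemma monomial_word:
  assumes "\<alpha> \<in> monomials n d"
  shows "monomial_word n d \<alpha> \<in> words n d" and "word_exponent d (monomial_word n d \<alpha>) = \<alpha>"
  using someI_ex[OF word_exponent_surj[OF assms, unfolded Bex_def]]
  unfolding monomial_word_def by auto

text \<open>
  Writing the monomial \<open>X\<^sup>\<alpha>\<close> as \<open>\<Prod>t<d. X (u t)\<close> for the word \<open>u\<close> of \<open>\<alpha>\<close>, the substitution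
  \<open>X \<mapsto> AX\<close> turns it into \<open>\<Sum>w. (\<Prod>t<d. A (u t) (w t)) \<cdot> \<Prod>t<d. X (w t)\<close>.
\<close>

definition word_coeff ::
    "nat \<Rightarrow> nat \<Rightarrow> ((nat \<Rightarrow> nat) \<Rightarrow> real) \<Rightarrow> (nat \<Rightarrow> nat \<Rightarrow> real) \<Rightarrow> (nat \<Rightarrow> nat) \<Rightarrow> real" where
  "word_coeff n d c A w = (\<Sum>\<alpha>\<in>monomials n d. c \<alpha> * (\<Prod>t<d. A (monomial_word n d \<alpha> t) (w t)))"

definition subst_coeff ::
    "nat \<Rightarrow> nat \<Rightarrow> ((nat \<Rightarrow> nat) \<Rightarrow> real) \<Rightarrow> (nat \<Rightarrow> nat \<Rightarrow> real) \<Rightarrow> (nat \<Rightarrow> nat) \<Rightarrow> real" where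
  "subst_coeff n d c A \<beta> = (\<Sum>w\<in>{w\<in>words n d. word_exponent d w = \<beta>}. word_coeff n d c A w)"

lemma monomial_mat_vec_eq_sum_words:
  assumes "\<alpha> \<in> monomials n d"
  shows "(\<Prod>i<n. mat_vec n A X i ^ \<alpha> i)
    = (\<Sum>w\<in>words n d. (\<Prod>t<d. A (monomial_word n d \<alpha> t) (w t)) * (\<Prod>t<d. X (w t)))"
proof -
  let ?u = "monomial_word n d \<alpha>"
  have "(\<Prod>i<n. mat_vec n A X i ^ \<alpha> i) = (\<Prod>t<d. \<Sum>j<n. A (?u t) j * X j)"
    using prod_word_eq_monomial[OF monomial_word(1)[OF assms], of "mat_vec n A X"]
    by (simp add: monomial_word(2)[OF assms] mat_vec_def)
  also have "\<dots> = (\<Sum>w\<in>words n d. \<Prod>t<d. A (?u t) (w t) * X (w t))"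
    unfolding words_def by (rule prod_sum_PiE) auto
  finally show ?thesis
    by (simp add: prod.distrib)
qed

lemma form_eval_mat_vec:
  "form_eval n d c (mat_vec n A X) = form_eval n d (subst_coeff n d c A) X"
proof -
  let ?X = "\<lambda>w. \<Prod>t<d. X (w t)"
  have "form_eval n d c (mat_vec n A X)
      = (\<Sum>\<alpha>\<in>monomials n d. c \<alpha> *
           (\<Sum>w\<in>words n d. (\<Prod>t<d. A (monomial_word n d \<alpha> t) (w t)) * ?X w))"
    unfolding form_eval_def by (simp add: monomial_mat_vec_eq_sum_words)
  also have "\<dots> = (\<Sum>w\<in>words n d. word_coeff n d c A w * ?X w)"
    unfolding word_coeff_def sum_distrib_left sum_distrib_right
    by (subst sum.swap) (simp add: mult.assoc)
  also have "\<dots> = (\<Sum>w\<in>words n d. word_coeff n d c A w * (\<Prod>j<n. X j ^ word_exponent d w j))"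
    by (intro sum.cong refl) (simp add: prod_word_eq_monomial)
  also have "\<dots> = (\<Sum>\<beta>\<in>monomials n d. \<Sum>w\<in>{w\<in>words n d. word_exponent d w = \<beta>}.
                     word_coeff n d c A w * (\<Prod>j<n. X j ^ word_exponent d w j))"
    by (rule sum.group[symmetric])
      (auto simp: finite_words finite_monomials word_exponent_in_monomials)
  also have "\<dots> = form_eval n d (subst_coeff n d c A) X"
    unfolding form_eval_def subst_coeff_def sum_distrib_right by (intro sum.cong refl) auto
  finally show ?thesis .
qed

section \<open>Products of matrices from \<open>PW\<^sub>n\<close>\<close>

lemma foldr_mat_mult_eq:
  assumes "i < n"
  shows "foldr (mat_mult n) Bs M i j = (\<Sum>l<n. mat_prod_list n Bs i l * M l j)"
  using assms
proof (induction Bs arbitrary: i)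
  case Nil
  have "(\<Sum>l<n. id_mat n i l * M l j) = (\<Sum>l<n. if l = i then M i j else 0)"
    by (intro sum.cong) (auto simp: id_mat_def)
  then show ?case
    using Nil by (simp add: mat_prod_list_def)
next
  case (Cons B Bs)
  have "foldr (mat_mult n) (B # Bs) M i j = (\<Sum>l<n. B i l * (\<Sum>k<n. mat_prod_list n Bs l k * M k j))"
    using Cons.IH by (simp add: mat_mult_def[of n B])
  also have "\<dots> = (\<Sum>k<n. (\<Sum>l<n. B i l * mat_prod_list n Bs l k) * M k j)"
    unfolding sum_distrib_left sum_distrib_right by (subst sum.swap) (simp add: mult.assoc)
  also have "\<dots> = (\<Sum>k<n. mat_prod_list n (B # Bs) i k * M k j)"
    by (simp add: mat_prod_list_def mat_mult_def)
  finally show ?case .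
qed

lemma mat_prod_list_snoc:
  assumes "i < n" "j < n"
  shows "mat_prod_list n (Bs @ [B]) i j = mat_mult n (mat_prod_list n Bs) B i j"
proof -
  have "mat_mult n B (id_mat n) l j = B l j" for l
  proof -
    have "mat_mult n B (id_mat n) l j = (\<Sum>q<n. if q = j then B l j else 0)"
      unfolding mat_mult_def by (intro sum.cong) (auto simp: id_mat_def)
    then show ?thesis
      using assms by simp
  qed
  then show ?thesis
    using foldr_mat_mult_eq[OF assms(1), of Bs "mat_mult n B (id_mat n)" j]
    by (simp add: mat_prod_list_def mat_mult_def)
qed

lemma card_permutes_preimage_atMost:
  assumes k: "k permutes {..<n}" and "j < n"
  shows "card {l\<in>{..<n}. k l \<le> j} = j + 1"
proof -
  have "k ` {l\<in>{..<n}. k l \<le> j} = {..j}"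
  proof
    show "{..j} \<subseteq> k ` {l\<in>{..<n}. k l \<le> j}"
    proof
      fix y assume "y \<in> {..j}"
      moreover from this have "y \<in> k ` {..<n}"
        using permutes_image[OF k] \<open>j < n\<close> by auto
      ultimately show "y \<in> k ` {l\<in>{..<n}. k l \<le> j}"
        by auto
    qed
  qed auto
  moreover have "card (k ` {l\<in>{..<n}. k l \<le> j}) = card {l\<in>{..<n}. k l \<le> j}"
    using permutes_inj_on[OF k] by (rule card_image)
  ultimately show ?thesis
    by simp
qed

text \<open>
  With \<open>B = P\<^sub>k W\<^sub>n\<close>, column \<open>j\<close> of \<open>AB\<close> is the average of the columns \<open>l\<close> of \<open>A\<close> with
  \<open>k l \<le> j\<close>; these index sets increase with \<open>j\<close> and have \<open>j + 1\<close> elements.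
\<close>

lemma mat_mult_PW_column_average:
  assumes "B \<in> PW n"
  obtains T where "\<And>j. T j \<subseteq> {..<n}" and "\<And>j. j < n \<Longrightarrow> card (T j) = j + 1"
    and "\<And>j j'. j \<le> j' \<Longrightarrow> T j \<subseteq> T j'"
    and "\<And>A i j. j < n \<Longrightarrow> mat_mult n A B i j = sum (A i) (T j) / card (T j)"
proof -
  obtain k where k: "k permutes {..<n}" and B: "B = mat_mult n (perm_mat n k) (Wmat n)"
    using assms by (auto simp: PW_def)
  define T where "T j = {l\<in>{..<n}. k l \<le> j}" for j
  have B_entry: "B l j = (if k l \<le> j then 1 / real (j + 1) else 0)" if "l < n" "j < n" for l j
  proof -
    have kl: "k l < n"
      using permutes_in_image[OF k] that by simp
    have "B l j = (\<Sum>q<n. if q = k l then Wmat n q j else 0)"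
      unfolding B mat_mult_def perm_mat_def using that by (intro sum.cong refl) auto
    then show ?thesis
      using kl that by (simp add: Wmat_def)
  qed
  show ?thesis
  proof (rule that)
    show "T j \<subseteq> {..<n}" for j
      by (auto simp: T_def)
    show "card (T j) = j + 1" if "j < n" for j
      using card_permutes_preimage_atMost[OF k that] by (simp add: T_def)
    show "T j \<subseteq> T j'" if "j \<le> j'" for j j'
      using that by (auto simp: T_def)
    show "mat_mult n A B i j = sum (A i) (T j) / card (T j)" if "j < n" for A i j
    proof -
      have "mat_mult n A B i j = (\<Sum>l<n. if k l \<le> j then A i l / real (j + 1) else 0)"
        unfolding mat_mult_def using that by (intro sum.cong refl) (auto simp: B_entry)
      also have "\<dots> = sum (A i) (T j) / real (j + 1)"
        unfolding T_def sum_divide_distrib by (rule sum.inter_filter[symmetric]) simp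
      finally show ?thesis
        using card_permutes_preimage_atMost[OF k that] by (simp add: T_def)
    qed
  qed
qed

section \<open>Averaging contracts the rows\<close>

lemma abs_diff_average_le:
  fixes a :: "nat \<Rightarrow> real"
  assumes "finite T" "T \<noteq> {}" "\<And>l'. l' \<in> T \<Longrightarrow> \<bar>a l - a l'\<bar> \<le> \<delta>"
  shows "\<bar>a l - sum a T / card T\<bar> \<le> \<delta>"
proof -
  have card_pos: "card T > 0"
    using assms by (simp add: card_gt_0_iff)
  have "\<bar>a l - sum a T / card T\<bar> = \<bar>\<Sum>l'\<in>T. a l - a l'\<bar> / card T"
    using card_pos by (simp add: sum_subtractf field_simps)
  also have "\<dots> \<le> (\<Sum>l'\<in>T. \<delta>) / card T"
    using assms(3) by (intro divide_right_mono order.trans[OF sum_abs] sum_mono) auto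
  also have "\<dots> = \<delta>"
    using card_pos by simp
  finally show ?thesis .
qed

text \<open>
  Passing from \<open>T\<close> to \<open>T' \<supseteq> T\<close> moves the average only through the at most \<open>card T' - 1\<close>
  new terms, each within \<open>\<delta>\<close> of the old average.
\<close>

lemma abs_diff_average_superset_le:
  fixes a :: "nat \<Rightarrow> real"
  assumes "finite T'" "T \<subseteq> T'" "T \<noteq> {}" "card T' \<le> n"
    and osc: "\<And>l l'. l \<in> T' \<Longrightarrow> l' \<in> T' \<Longrightarrow> \<bar>a l - a l'\<bar> \<le> \<delta>"
  shows "\<bar>sum a T' / card T' - sum a T / card T\<bar> \<le> (1 - 1 / real n) * \<delta>"
proof -
  define \<mu> where "\<mu> = sum a T / card T"
  have "finite T"
    using assms finite_subset by blast
  have card_le: "card T \<le> card T'" and card_pos: "card T > 0"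
    using assms \<open>finite T\<close> by (auto intro: card_mono simp: card_gt_0_iff)
  have "real (card T') > 0"
    using card_pos card_le by linarith
  have \<delta>_nonneg: "\<delta> \<ge> 0"
    using osc assms(2,3) by force
  have mean_zero: "(\<Sum>l\<in>T. a l - \<mu>) = 0"
    using card_pos by (simp add: \<mu>_def sum_subtractf)
  have "sum a T' / card T' - \<mu> = (\<Sum>l\<in>T'. a l - \<mu>) / card T'"
    using card_pos card_le by (simp add: sum_subtractf field_simps)
  also have "\<dots> = (\<Sum>l\<in>T' - T. a l - \<mu>) / card T'"
    using assms(1,2) mean_zero by (simp add: sum.subset_diff[of T T'])
  finally have "\<bar>sum a T' / card T' - \<mu>\<bar> = \<bar>\<Sum>l\<in>T' - T. a l - \<mu>\<bar> / card T'"
    by simp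
  also have "\<dots> \<le> (\<Sum>l\<in>T' - T. \<delta>) / card T'"
    unfolding \<mu>_def using assms(2)
    by (intro divide_right_mono order.trans[OF sum_abs] sum_mono abs_diff_average_le[OF \<open>finite T\<close> assms(3)] osc)
      auto
  also have "\<dots> = (real (card T') - card T) * \<delta> / card T'"
    using card_le assms(1,2) by (simp add: card_Diff_subset finite_subset)
  also have "\<dots> = (1 - card T / card T') * \<delta>"
    using \<open>real (card T') > 0\<close> by (simp add: field_simps)
  also have "\<dots> \<le> (1 - 1 / real n) * \<delta>"
    using card_pos card_le assms(4) \<delta>_nonneg
    by (intro mult_right_mono diff_left_mono frac_le) auto
  finally show ?thesis
    by (simp add: \<mu>_def)
qed

definition flat_stochastic :: "nat \<Rightarrow> (nat \<Rightarrow> nat \<Rightarrow> real) \<Rightarrow> real \<Rightarrow> bool" where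
  "flat_stochastic n A \<epsilon> \<longleftrightarrow> (\<forall>i<n. \<forall>j<n. 0 \<le> A i j) \<and> (\<forall>j<n. (\<Sum>i<n. A i j) = 1) \<and>
     (\<forall>i<n. \<forall>j<n. \<forall>j'<n. \<bar>A i j - A i j'\<bar> \<le> \<epsilon>)"

lemma flat_stochastic_cong:
  "flat_stochastic n A \<epsilon> \<Longrightarrow> (\<And>i j. i < n \<Longrightarrow> j < n \<Longrightarrow> A' i j = A i j) \<Longrightarrow> flat_stochastic n A' \<epsilon>"
  by (simp add: flat_stochastic_def)

lemma flat_stochastic_id_mat: "flat_stochastic n (id_mat n) 1"
proof -
  have "(\<Sum>i<n. id_mat n i j) = 1" if "j < n" for j
    using that by (simp add: id_mat_def)
  then show ?thesis
    by (auto simp: flat_stochastic_def id_mat_def)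
qed

lemma flat_stochastic_mult_PW:
  assumes A: "flat_stochastic n A \<delta>" and "B \<in> PW n"
  shows "flat_stochastic n (mat_mult n A B) ((1 - 1 / real n) * \<delta>)"
proof -
  obtain T where T_sub: "\<And>j. T j \<subseteq> {..<n}" and card_T: "\<And>j. j < n \<Longrightarrow> card (T j) = j + 1"
    and T_mono: "\<And>j j'. j \<le> j' \<Longrightarrow> T j \<subseteq> T j'"
    and AB: "\<And>A i j. j < n \<Longrightarrow> mat_mult n A B i j = sum (A i) (T j) / card (T j)"
    using mat_mult_PW_column_average[OF \<open>B \<in> PW n\<close>] by blast
  have finite_T: "finite (T j)" for j
    using T_sub finite_subset by blast
  have "0 \<le> mat_mult n A B i j" if "i < n" "j < n" for i j
    using A T_sub that by (auto simp: AB flat_stochastic_def intro!: divide_nonneg_nonneg sum_nonneg)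
  moreover have "(\<Sum>i<n. mat_mult n A B i j) = 1" if "j < n" for j
  proof -
    have "(\<Sum>i<n. mat_mult n A B i j) = (\<Sum>l\<in>T j. \<Sum>i<n. A i l) / card (T j)"
      using that by (simp add: AB sum_divide_distrib[symmetric] sum.swap[of _ "{..<n}"])
    also have "(\<Sum>l\<in>T j. \<Sum>i<n. A i l) = (\<Sum>l\<in>T j. 1)"
      using A T_sub[of j] by (intro sum.cong refl) (auto simp: flat_stochastic_def subset_iff)
    also have "\<dots> / card (T j) = 1"
      using card_T[OF that] by simp
    finally show ?thesis .
  qed
  moreover have "\<bar>mat_mult n A B i j - mat_mult n A B i j'\<bar> \<le> (1 - 1 / real n) * \<delta>"
    if "i < n" "j < n" "j' < n" "j \<le> j'" for i j j'
  proof -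
    have "T j \<noteq> {}"
      using card_T[OF that(2)] by auto
    moreover have "card (T j') \<le> n"
      using card_mono[OF _ T_sub] by fastforce
    moreover have "\<bar>A i l - A i l'\<bar> \<le> \<delta>" if "l \<in> T j'" "l' \<in> T j'" for l l'
      using A T_sub[of j'] that \<open>i < n\<close> by (auto simp: flat_stochastic_def subset_iff)
    ultimately show ?thesis
      using that finite_T T_mono[OF that(4)]
      by (subst abs_minus_commute) (simp add: AB abs_diff_average_superset_le)
  qed
  ultimately show ?thesis
    unfolding flat_stochastic_def by (metis abs_minus_commute nle_le)
qed

lemma flat_stochastic_mat_prod_list:
  "set Bs \<subseteq> PW n \<Longrightarrow> flat_stochastic n (mat_prod_list n Bs) ((1 - 1 / real n) ^ length Bs)"
proof (induction Bs rule: rev_induct)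
  case Nil
  show ?case
    using flat_stochastic_id_mat by (simp add: mat_prod_list_def)
next
  case (snoc B Bs)
  then have "flat_stochastic n (mat_mult n (mat_prod_list n Bs) B) ((1 - 1 / real n) ^ length (Bs @ [B]))"
    using flat_stochastic_mult_PW by simp
  then show ?case
    by (rule flat_stochastic_cong) (simp add: mat_prod_list_snoc)
qed

section \<open>Positivity of the coefficients\<close>

lemma flat_stochastic_le_1:
  assumes "flat_stochastic n A \<epsilon>" "i < n" "j < n"
  shows "A i j \<le> 1"
proof -
  have "A i j \<le> (\<Sum>i<n. A i j)"
    using assms by (intro member_le_sum) (auto simp: flat_stochastic_def)
  then show ?thesis
    using assms by (simp add: flat_stochastic_def)
qed

lemma prod_word_close_to_first_column:
  assumes A: "flat_stochastic n A \<epsilon>" and "u \<in> words n d" "w \<in> words n d"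
  shows "\<bar>(\<Prod>t<d. A (u t) (w t)) - (\<Prod>t<d. A (u t) 0)\<bar> \<le> real d * \<epsilon>"
proof -
  have letters: "u t < n" "w t < n" "0 < n" if "t < d" for t
    using words_letter_less[OF \<open>u \<in> words n d\<close> that] words_letter_less[OF \<open>w \<in> words n d\<close> that]
    by auto
  have entry_abs_le_1: "\<bar>A i j\<bar> \<le> 1" if "i < n" "j < n" for i j
    using A flat_stochastic_le_1[OF A that] that by (auto simp: flat_stochastic_def)
  have "\<bar>(\<Prod>t<d. A (u t) (w t)) - (\<Prod>t<d. A (u t) 0)\<bar> \<le> (\<Sum>t<d. \<bar>A (u t) (w t) - A (u t) 0\<bar>)"
    using norm_prod_diff[of "{..<d}" "\<lambda>t. A (u t) (w t)" "\<lambda>t. A (u t) 0"] letters entry_abs_le_1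
    by simp
  also have "\<dots> \<le> (\<Sum>t<d. \<epsilon>)"
    using A letters by (intro sum_mono) (auto simp: flat_stochastic_def)
  finally show ?thesis
    by simp
qed

lemma word_coeff_close_to_form_eval:
  assumes A: "flat_stochastic n A \<epsilon>" and w: "w \<in> words n d"
  shows "\<bar>word_coeff n d c A w - form_eval n d c (\<lambda>i. A i 0)\<bar>
    \<le> (\<Sum>\<alpha>\<in>monomials n d. \<bar>c \<alpha>\<bar>) * (real d * \<epsilon>)"
proof -
  let ?u = "monomial_word n d"
  have "form_eval n d c (\<lambda>i. A i 0) = (\<Sum>\<alpha>\<in>monomials n d. c \<alpha> * (\<Prod>t<d. A (?u \<alpha> t) 0))"
    unfolding form_eval_def
  proof (intro sum.cong refl arg_cong2[where f = "(*)"])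
    fix \<alpha> assume "\<alpha> \<in> monomials n d"
    then show "(\<Prod>i<n. A i 0 ^ \<alpha> i) = (\<Prod>t<d. A (?u \<alpha> t) 0)"
      using prod_word_eq_monomial[OF monomial_word(1), of \<alpha> n d "\<lambda>i. A i 0"]
      by (simp add: monomial_word(2))
  qed
  then have "\<bar>word_coeff n d c A w - form_eval n d c (\<lambda>i. A i 0)\<bar>
      = \<bar>\<Sum>\<alpha>\<in>monomials n d. c \<alpha> * ((\<Prod>t<d. A (?u \<alpha> t) (w t)) - (\<Prod>t<d. A (?u \<alpha> t) 0))\<bar>"
    by (simp add: word_coeff_def sum_subtractf right_diff_distrib)
  also have "\<dots> \<le> (\<Sum>\<alpha>\<in>monomials n d. \<bar>c \<alpha>\<bar> * (real d * \<epsilon>))"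
  proof (rule order.trans[OF sum_abs sum_mono])
    fix \<alpha> assume "\<alpha> \<in> monomials n d"
    then show "\<bar>c \<alpha> * ((\<Prod>t<d. A (?u \<alpha> t) (w t)) - (\<Prod>t<d. A (?u \<alpha> t) 0))\<bar>
        \<le> \<bar>c \<alpha>\<bar> * (real d * \<epsilon>)"
      unfolding abs_mult
      by (intro mult_left_mono prod_word_close_to_first_column[OF A monomial_word(1) w]) auto
  qed
  finally show ?thesis
    by (simp add: sum_distrib_right)
qed

lemma subst_coeff_pos:
  assumes "n \<ge> 1" and A: "flat_stochastic n A \<epsilon>"
    and lower: "\<And>p. (\<forall>i<n. p i \<ge> 0) \<Longrightarrow> (\<Sum>i<n. p i) = 1 \<Longrightarrow> form_eval n d c p \<ge> \<delta>"
    and small: "(\<Sum>\<alpha>\<in>monomials n d. \<bar>c \<alpha>\<bar>) * (real d * \<epsilon>) < \<delta>"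
    and "\<beta> \<in> monomials n d"
  shows "subst_coeff n d c A \<beta> > 0"
proof -
  have "form_eval n d c (\<lambda>i. A i 0) \<ge> \<delta>"
    using A \<open>n \<ge> 1\<close> by (intro lower) (auto simp: flat_stochastic_def)
  then have word_coeff_pos: "word_coeff n d c A w > 0" if "w \<in> words n d" for w
    using word_coeff_close_to_form_eval[OF A that, of c] small by linarith
  obtain w where "w \<in> words n d" "word_exponent d w = \<beta>"
    using word_exponent_surj[OF \<open>\<beta> \<in> monomials n d\<close>] by blast
  then show ?thesis
    unfolding subst_coeff_def using finite_words word_coeff_pos
    by (intro sum_pos) auto
qed

theorem corollary4p1:
  fixes n d :: nat and c :: "(nat \<Rightarrow> nat) \<Rightarrow> real"
  assumes "n \<ge> 1"
    and "\<forall>X. (\<forall>i<n. X i \<ge> 0) \<and> (\<Sum>i<n. X i) = 1 \<longrightarrow> form_eval n d c X > 0"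
  shows "\<exists>M::nat. \<forall>m\<ge>M. \<forall>Bs. length Bs = m \<and> set Bs \<subseteq> PW n \<longrightarrow>
           (\<exists>g. (\<forall>\<beta>\<in>monomials n d. g \<beta> > 0) \<and>
                (\<forall>X. form_eval n d c (mat_vec n (mat_prod_list n Bs) X) = form_eval n d g X))"
proof -
  obtain \<delta> where "\<delta> > 0"
    and lower: "\<And>p. (\<forall>i<n. p i \<ge> 0) \<Longrightarrow> (\<Sum>i<n. p i) = 1 \<Longrightarrow> form_eval n d c p \<ge> \<delta>"
    using form_eval_bounded_below_on_simplex[OF assms] by blast
  define C where "C = (\<Sum>\<alpha>\<in>monomials n d. \<bar>c \<alpha>\<bar>)"
  define r where "r = 1 - 1 / real n"
  have "\<bar>r\<bar> < 1"
    using \<open>n \<ge> 1\<close> by (simp add: r_def)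
  then have "(\<lambda>m. C * (real d * r ^ m)) \<longlonglongrightarrow> 0"
    by (intro tendsto_mult_right_zero LIMSEQ_power_zero) simp
  from order_tendstoD(2)[OF this \<open>\<delta> > 0\<close>]
  obtain M where M: "\<And>m. m \<ge> M \<Longrightarrow> C * (real d * r ^ m) < \<delta>"
    unfolding eventually_sequentially by blast
  have "subst_coeff n d c (mat_prod_list n Bs) \<beta> > 0"
    if "length Bs \<ge> M" "set Bs \<subseteq> PW n" "\<beta> \<in> monomials n d" for Bs \<beta>
    using subst_coeff_pos[OF \<open>n \<ge> 1\<close> flat_stochastic_mat_prod_list[OF that(2)] lower]
      M[OF that(1)] that(3) by (simp add: C_def r_def)
  then show ?thesis
    using form_eval_mat_vec by blast
qed

end
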